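(* For every $\omega_p\in[0,\pi]$ and every $\theta_p$ (with $\theta_p\in\{0,\pi\}$ mod $2\pi$ when $\omega_p\in\{0,\pi\}$), $$\sup_{f\in\mathbb{RF}_{\omega_p,\theta_p}}\theta_f'(\omega_p)=\sup_{f\in\mathbb{AP}_{\omega_p,\theta_p}}\theta_f'(\omega_p).$$
   Context: $\mathbb{D}$ is the open unit disk. $\mathcal{RH}_\infty$: proper real-rational functions with all poles in $\mathbb{D}$, with $\|f\|_{H_\infty}=\sup_{\omega\in(-\pi,\pi]}|f(e^{j\omega})|$. $\theta_f(\omega):=\angle f(e^{j\omega})$ is a continuous choice of argument and $\theta_f'$ its derivative in $\omega$. $\mathbb{RF}_{\omega_p,\theta_p}:=\{f\in\mathcal{RH}_\infty:\ \|f\|_{H_\infty}=|f(e^{j\omega_p})|=1,\ \theta_f(\omega_p)=\theta_p\ (\mathrm{mod}\ 2\pi)\}$. $\mathbb{AP}$ is the set of $f\in\mathcal{RH}_\infty$ with $|f(e^{j\omega})|=1$ for all $\omega$; $\mathbb{AP}_{\omega_p,\theta_p}:=\mathbb{AP}\cap\mathbb{RF}_{\omega_p,\theta_p}$. *)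

theory Defs
  imports "HOL-Analysis.Analysis" "HOL-Computational_Algebra.Polynomial"
begin

definition RH_inf :: "(complex \<Rightarrow> complex) \<Rightarrow> bool" where
  "RH_inf f \<longleftrightarrow> (\<exists>p q :: real poly. q \<noteq> 0 \<and> degree p \<le> degree q \<and>
     (\<forall>z. poly (map_poly complex_of_real q) z = 0 \<longrightarrow> norm z < 1) \<and>
     (\<forall>z. poly (map_poly complex_of_real q) z \<noteq> 0 \<longrightarrow>
        f z = poly (map_poly complex_of_real p) z / poly (map_poly complex_of_real q) z))"

definition Hinf_norm :: "(complex \<Rightarrow> complex) \<Rightarrow> real" where
  "Hinf_norm f = (SUP w\<in>{-pi<..pi}. cmod (f (cis w)))"

definition phase_deriv :: "(complex \<Rightarrow> complex) \<Rightarrow> real \<Rightarrow> real" where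
  "phase_deriv f w = (THE d. \<exists>\<theta> e. e > 0 \<and> continuous_on {w - e<..<w + e} \<theta> \<and>
     (\<forall>t. \<bar>t - w\<bar> < e \<longrightarrow> f (cis t) = complex_of_real (cmod (f (cis t))) * cis (\<theta> t)) \<and>
     (\<theta> has_real_derivative d) (at w))"

definition RF :: "real \<Rightarrow> real \<Rightarrow> (complex \<Rightarrow> complex) set" where
  "RF wp tp = {f. RH_inf f \<and> Hinf_norm f = 1 \<and> cmod (f (cis wp)) = 1 \<and> f (cis wp) = cis tp}"

definition AP :: "(complex \<Rightarrow> complex) set" where
  "AP = {f. RH_inf f \<and> (\<forall>w. cmod (f (cis w)) = 1)}"

definition AP_at :: "real \<Rightarrow> real \<Rightarrow> (complex \<Rightarrow> complex) set" where
  "AP_at wp tp = AP \<inter> RF wp tp"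

end

theory Submission
  imports Defs "HOL-Complex_Analysis.Complex_Analysis"
begin

text \<open>
  For \<open>f\<close> in \<open>RH\<^sub>\<infinity>\<close> the reflected function \<open>g z = f (1 / z)\<close> is holomorphic near the closed
  unit disc, commutes with complex conjugation (real coefficients) and, if \<open>\<parallel>f\<parallel>\<^sub>\<infinity> = 1\<close>, maps
  the disc into itself.  The phase derivative of \<open>f\<close> at \<open>\<omega>\<^sub>p\<close> is \<open>- Re (\<zeta> g'(\<zeta>) / g(\<zeta>))\<close>
  with \<open>\<zeta> = cis (- \<omega>\<^sub>p)\<close>.  The Schwarz--Pick lemma applied to \<open>r \<zeta>\<close> and its conjugate, in the
  limit \<open>r \<rightarrow> 1\<close>, gives the Julia-type boundary estimate
  \<open>Re (\<zeta> g'(\<zeta>) / g(\<zeta>)) \<ge> |1 - g(\<zeta>)\<^sup>2| / |1 - \<zeta>\<^sup>2| = |sin \<theta>\<^sub>p| / sin \<omega>\<^sub>p\<close>.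
  So every phase derivative over \<open>RF\<close> is at most \<open>- |sin \<theta>\<^sub>p| / sin \<omega>\<^sub>p\<close>, and this bound is attained
  by a first-order all-pass function \<open>s (1 - a z) / (z - a)\<close> with real \<open>|a| < 1\<close> and \<open>s = \<plusminus>1\<close>
  (or by a constant when \<open>sin \<theta>\<^sub>p = 0\<close>); hence both suprema equal it.
\<close>

section \<open>Phase derivatives\<close>

definition phase_lift :: "(complex \<Rightarrow> complex) \<Rightarrow> real \<Rightarrow> real \<Rightarrow> (real \<Rightarrow> real) \<Rightarrow> bool" where
  "phase_lift f w e \<theta> \<longleftrightarrow> e > 0 \<and> continuous_on {w - e<..<w + e} \<theta> \<and>
     (\<forall>t. \<bar>t - w\<bar> < e \<longrightarrow> f (cis t) = of_real (cmod (f (cis t))) * cis (\<theta> t))"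

lemma phase_deriv_altdef:
  "phase_deriv f w = (THE d. \<exists>\<theta> e. phase_lift f w e \<theta> \<and> (\<theta> has_real_derivative d) (at w))"
  unfolding phase_deriv_def phase_lift_def by (simp only: conj_assoc)

lemma phase_deriv_cong:
  assumes "\<And>t. f (cis t) = g (cis t)"
  shows "phase_deriv f w = phase_deriv g w"
  unfolding phase_deriv_def assms ..

lemma isCont_imp_eventually_in_open:
  assumes "isCont f x" "open S" "f x \<in> S"
  shows "\<forall>\<^sub>F y in nhds x. f y \<in> S"
  using assms unfolding isCont_def tendsto_def eventually_at_filter
  by (auto elim: eventually_mono)

lemma eventually_eq_if_cis_eq_1:
  fixes \<delta> :: "real \<Rightarrow> real"
  assumes "isCont \<delta> w" and "\<forall>\<^sub>F t in nhds w. cis (\<delta> t) = 1"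
  shows "\<forall>\<^sub>F t in nhds w. \<delta> t = \<delta> w"
proof -
  have \<delta>w: "cis (\<delta> w) = 1"
    using assms(2) eventually_nhds_x_imp_x by blast
  have "\<forall>\<^sub>F t in nhds w. \<delta> t \<in> ball (\<delta> w) (2 * pi)"
    by (rule isCont_imp_eventually_in_open[OF assms(1)]) auto
  with assms(2) show ?thesis
  proof eventually_elim
    case (elim t)
    then have "cis (\<delta> t - \<delta> w) = 1"
      using \<delta>w by (simp flip: cis_divide)
    then have "cos (\<delta> t - \<delta> w) = 1"
      by (metis cis.sel(1) one_complex.sel(1))
    then obtain k :: int where k: "\<delta> t - \<delta> w = of_int k * 2 * pi"
      using cos_one_2pi_int by blast
    with elim have "\<bar>of_int k\<bar> * (2 * pi) < 1 * (2 * pi)"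
      by (simp add: abs_mult dist_real_def abs_minus_commute)
    then have "k = 0"
      by (subst (asm) mult_less_cancel_right) auto
    with k show ?case by simp
  qed
qed

lemma phase_lift_derivative_unique:
  assumes "isCont (\<lambda>t. f (cis t)) w" "f (cis w) \<noteq> 0"
    and lift1: "phase_lift f w e1 \<theta>1" and d1: "(\<theta>1 has_real_derivative d1) (at w)"
    and lift2: "phase_lift f w e2 \<theta>2" and d2: "(\<theta>2 has_real_derivative d2) (at w)"
  shows "d1 = d2"
proof -
  define \<delta> where "\<delta> t = \<theta>2 t - \<theta>1 t" for t
  have "\<forall>\<^sub>F t in nhds w. f (cis t) \<in> - {0}"
    using assms(2) by (intro isCont_imp_eventually_in_open[OF assms(1)]) auto
  moreover have "\<forall>\<^sub>F t in nhds w. t \<in> ball w (min e1 e2)"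
    using lift1 lift2 unfolding phase_lift_def by (intro eventually_nhds_in_open) auto
  ultimately have "\<forall>\<^sub>F t in nhds w. cis (\<delta> t) = 1"
  proof eventually_elim
    case (elim t)
    then have "\<bar>t - w\<bar> < e1" "\<bar>t - w\<bar> < e2" "f (cis t) \<noteq> 0"
      by (auto simp: dist_real_def abs_minus_commute)
    with lift1 lift2 have "cis (\<theta>1 t) = cis (\<theta>2 t)"
      unfolding phase_lift_def by (metis mult_cancel_left norm_eq_zero of_real_eq_0_iff)
    then show ?case by (simp add: \<delta>_def flip: cis_divide)
  qed
  moreover have "isCont \<delta> w"
    unfolding \<delta>_def using DERIV_isCont[OF d1] DERIV_isCont[OF d2] by (intro continuous_intros)
  ultimately have "\<forall>\<^sub>F t in nhds w. \<delta> t = \<delta> w"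
    by (intro eventually_eq_if_cis_eq_1)
  then have shift: "\<forall>\<^sub>F t in nhds w. \<theta>1 t + \<delta> w = \<theta>2 t"
    by (rule eventually_mono) (simp add: \<delta>_def)
  have "((\<lambda>t. \<theta>1 t + \<delta> w) has_real_derivative d1) (at w)"
    using d1 by (auto intro!: derivative_eq_intros)
  then have "(\<theta>2 has_real_derivative d1) (at w)"
    using DERIV_cong_ev[OF refl shift refl] by simp
  with d2 show ?thesis
    by (rule DERIV_unique[symmetric])
qed

lemma phase_deriv_eqI:
  assumes "isCont (\<lambda>t. f (cis t)) w" "f (cis w) \<noteq> 0"
    and "phase_lift f w e \<theta>" "(\<theta> has_real_derivative d) (at w)"
  shows "phase_deriv f w = d"
  unfolding phase_deriv_altdef
proof (rule the_equality)
  show "\<exists>\<theta> e. phase_lift f w e \<theta> \<and> (\<theta> has_real_derivative d) (at w)"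
    using assms(3,4) by blast
  show "d' = d" if "\<exists>\<theta> e. phase_lift f w e \<theta> \<and> (\<theta> has_real_derivative d') (at w)" for d'
    using that phase_lift_derivative_unique[OF assms] by blast
qed

lemma isCont_comp_cis:
  assumes "isCont f (cis t)"
  shows "isCont (\<lambda>t. f (cis t)) t"
  using isCont_o2[where f=cis and g=f] assms by (simp add: isCont_def tendsto_cis tendsto_ident_at)

lemma has_vector_derivative_comp_cis:
  assumes "(f has_field_derivative D) (at (cis w))"
  shows "((\<lambda>t. f (cis t)) has_vector_derivative \<i> * cis w * D) (at w)"
proof -
  have "((\<lambda>t. cis t) has_vector_derivative \<i> * cis w) (at w)"
    by (auto intro!: derivative_eq_intros simp: has_vector_derivative_def)
  from field_vector_diff_chain_at[OF this assms] show ?thesis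
    by (simp add: o_def)
qed

lemma mult_eq_polar_Arg_Ln:
  assumes "c \<noteq> 0" "u \<noteq> 0"
  shows "c * u = of_real (cmod (c * u)) * cis (Arg c + Im (Ln u))"
proof -
  have "u = of_real (cmod u) * cis (Im (Ln u))"
    using assms(2) by (metis exp_Ln exp_eq_polar norm_exp_eq_Re)
  moreover have "c = of_real (cmod c) * cis (Arg c)"
    using assms(1) by (simp add: cis_Arg complex_sgn_def scaleR_conv_of_real)
  ultimately have "c * u = (of_real (cmod c) * cis (Arg c)) * (of_real (cmod u) * cis (Im (Ln u)))"
    by (rule arg_cong2)
  also have "\<dots> = of_real (cmod c * cmod u) * cis (Arg c + Im (Ln u))"
    by (simp add: cis_mult mult_ac)
  finally show ?thesis
    unfolding norm_mult .
qed

lemma phase_lift_exists: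
  assumes cont: "\<And>t. isCont f (cis t)"
    and deriv: "(f has_field_derivative D) (at (cis w))" and nz: "f (cis w) \<noteq> 0"
  obtains e \<theta> where "phase_lift f w e \<theta>"
    and "(\<theta> has_real_derivative Re (cis w * D / f (cis w))) (at w)"
proof -
  define c where "c = f (cis w)"
  define U where "U t = f (cis t) / c" for t
  have U_cont: "isCont U t" for t
    unfolding U_def using isCont_comp_cis[OF cont] nz by (intro continuous_intros) (auto simp: c_def)
  have "\<forall>\<^sub>F t in nhds w. U t \<in> {z. Re z > 0}"
    using nz by (intro isCont_imp_eventually_in_open[OF U_cont] open_halfspace_Re_gt) (simp add: U_def c_def)
  then obtain e where e: "e > 0" and U_pos: "\<And>t. \<bar>t - w\<bar> < e \<Longrightarrow> Re (U t) > 0"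
    unfolding eventually_nhds_metric dist_real_def by auto
  have U_slit: "U t \<notin> \<real>\<^sub>\<le>\<^sub>0" if "\<bar>t - w\<bar> < e" for t
    using U_pos[OF that] by (auto elim!: nonpos_Reals_cases)
  \<comment> \<open>a continuous argument near \<open>w\<close>: \<open>Arg c\<close> plus the principal argument of \<open>U\<close>, which stays in the right half plane\<close>
  define \<theta> where "\<theta> t = Arg c + Im (Ln (U t))" for t
  have "phase_lift f w e \<theta>"
    unfolding phase_lift_def
  proof (intro conjI allI impI e)
    show "continuous_on {w - e<..<w + e} \<theta>"
      unfolding \<theta>_def using U_slit
      by (intro continuous_at_imp_continuous_on ballI continuous_intros isCont_Ln' U_cont) auto
    fix t assume "\<bar>t - w\<bar> < e"
    then have "U t \<noteq> 0"
      using U_pos by fastforce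
    have fU: "f (cis t) = c * U t"
      using nz by (simp add: U_def c_def)
    show "f (cis t) = of_real (cmod (f (cis t))) * cis (\<theta> t)"
      unfolding fU \<theta>_def using nz \<open>U t \<noteq> 0\<close> by (intro mult_eq_polar_Arg_Ln) (simp_all add: c_def)
  qed
  moreover have "(\<theta> has_real_derivative Re (cis w * D / c)) (at w)"
  proof -
    have U': "(U has_vector_derivative \<i> * cis w * D / c) (at w)"
      unfolding U_def using has_vector_derivative_comp_cis[OF deriv] by (auto intro!: derivative_eq_intros)
    have Ln': "(Ln has_field_derivative 1) (at (U w))"
      using nz has_field_derivative_Ln[of 1] by (simp add: U_def c_def)
    have "((\<lambda>t. Ln (U t)) has_vector_derivative \<i> * cis w * D / c) (at w)"
      using field_vector_diff_chain_at[OF U' Ln'] by (simp add: o_def)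
    moreover have "Im (\<i> * cis w * D / c) = Re (cis w * D / c)"
      by (metis Im_i_times mult.assoc times_divide_eq_right)
    ultimately show ?thesis
      unfolding \<theta>_def by (auto intro!: derivative_eq_intros)
  qed
  ultimately show ?thesis
    using that by (simp add: c_def)
qed

lemma phase_deriv_eq:
  assumes "\<And>t. isCont f (cis t)"
    and "(f has_field_derivative D) (at (cis w))" and "f (cis w) \<noteq> 0"
  shows "phase_deriv f w = Re (cis w * D / f (cis w))"
proof -
  obtain e \<theta> where "phase_lift f w e \<theta>" "(\<theta> has_real_derivative Re (cis w * D / f (cis w))) (at w)"
    using phase_lift_exists[OF assms] .
  moreover have "isCont (\<lambda>t. f (cis t)) w"
    using isCont_comp_cis[OF assms(1)] .
  ultimately show ?thesis
    using assms(3) by (intro phase_deriv_eqI)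
qed

section \<open>Schwarz--Pick and Julia estimates for real-symmetric self-maps of the disc\<close>

lemma one_minus_norm_Moebius_function_squared:
  assumes a: "cmod a < 1" and b: "cmod b < 1"
  shows "1 - cmod (Moebius_function 0 a b) ^ 2 =
         (1 - cmod a ^ 2) * (1 - cmod b ^ 2) / cmod (1 - cnj a * b) ^ 2"
proof -
  have "cmod (cnj a * b) < 1"
    using norm_mult_less[of "cnj a" 1 b 1] a b by simp
  then have den: "1 - cnj a * b \<noteq> 0" by auto
  then have "1 - a * cnj b \<noteq> 0"
    by (metis complex_cnj_cnj complex_cnj_mult complex_cnj_one right_minus_eq)
  with den show ?thesis
    apply (cases a, cases b)
    apply (simp add: Moebius_function_def divide_simps norm_divide norm_mult)
    apply (simp add: complex_norm complex_diff complex_mult one_complex.code complex_cnj)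
    apply (auto simp: algebra_simps power2_eq_square)
    done
qed

lemma Schwarz_Pick:
  assumes hol: "g holomorphic_on ball 0 1" and into: "\<And>z. cmod z < 1 \<Longrightarrow> cmod (g z) < 1"
    and z1: "cmod z1 < 1" and z2: "cmod z2 < 1"
  shows "cmod (Moebius_function 0 (g z1) (g z2)) \<le> cmod (Moebius_function 0 z1 z2)"
proof -
  define h where "h = Moebius_function 0 (g z1) \<circ> g \<circ> Moebius_function 0 (- z1)"
  have to_disc: "Moebius_function 0 (- z1) ` ball 0 1 \<subseteq> ball 0 1"
    using Moebius_function_norm_lt_1 z1 by auto
  have "(Moebius_function 0 (g z1) \<circ> g) holomorphic_on ball 0 1"
    using z1 into by (intro holomorphic_on_compose_gen[OF hol Moebius_function_holomorphic]) auto
  then have "h holomorphic_on ball 0 1"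
    unfolding h_def using z1 by (intro holomorphic_on_compose_gen[OF _ _ to_disc] Moebius_function_holomorphic) auto
  moreover have "h 0 = 0"
    by (simp add: h_def Moebius_function_of_zero Moebius_function_eq_zero)
  moreover have "cmod (h z) < 1" if "cmod z < 1" for z
    unfolding h_def o_def using that z1 by (intro Moebius_function_norm_lt_1 into) auto
  moreover have "cmod (Moebius_function 0 z1 z2) < 1"
    using Moebius_function_norm_lt_1 z1 z2 by blast
  ultimately have "cmod (h (Moebius_function 0 z1 z2)) \<le> cmod (Moebius_function 0 z1 z2)"
    using Schwarz_Lemma(1) by simp
  moreover have "Moebius_function 0 (- z1) (Moebius_function 0 z1 z2) = z2"
    using z1 z2 by (intro Moebius_function_compose) auto
  ultimately show ?thesis by (simp add: h_def)
qed

lemma one_minus_square_neq_0: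
  fixes u :: complex
  assumes "cmod u < 1"
  shows "1 - u ^ 2 \<noteq> 0"
proof
  assume "1 - u ^ 2 = 0"
  then have "cmod (u ^ 2) = 1" by simp
  with assms show False by (simp add: norm_power abs_square_eq_1)
qed

lemma Schwarz_Pick_conj:
  assumes hol: "g holomorphic_on ball 0 1" and into: "\<And>z. cmod z < 1 \<Longrightarrow> cmod (g z) < 1"
    and z: "cmod z < 1" and sym: "g (cnj z) = cnj (g z)"
  shows "(1 - cmod z ^ 2) * cmod (1 - g z ^ 2) \<le> (1 - cmod (g z) ^ 2) * cmod (1 - z ^ 2)"
proof -
  define \<rho> where "\<rho> u = (1 - cmod u ^ 2) / cmod (1 - u ^ 2)" for u :: complex
  have conj_dist: "1 - cmod (Moebius_function 0 u (cnj u)) ^ 2 = \<rho> u ^ 2" if "cmod u < 1" for u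
  proof -
    have "cmod (1 - cnj u * cnj u) = cmod (1 - u ^ 2)"
      by (metis complex_cnj_mult complex_cnj_one complex_cnj_diff complex_mod_cnj power2_eq_square)
    then show ?thesis
      using one_minus_norm_Moebius_function_squared[of u "cnj u"] that
      by (simp add: \<rho>_def power_divide power2_eq_square)
  qed
  have gz: "cmod (g z) < 1" using into[OF z] .
  have "cmod (Moebius_function 0 (g z) (cnj (g z))) \<le> cmod (Moebius_function 0 z (cnj z))"
    using Schwarz_Pick[OF hol into z, of "cnj z"] z sym by simp
  then have "cmod (Moebius_function 0 (g z) (cnj (g z))) ^ 2 \<le> cmod (Moebius_function 0 z (cnj z)) ^ 2"
    by (rule power_mono) simp
  then have "\<rho> z ^ 2 \<le> \<rho> (g z) ^ 2"
    using conj_dist[OF z] conj_dist[OF gz] by linarith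
  moreover have "0 \<le> \<rho> (g z)"
    using gz by (simp add: \<rho>_def power_le_one less_imp_le)
  ultimately have "\<rho> z \<le> \<rho> (g z)"
    by (rule power2_le_imp_le)
  moreover have "cmod (1 - z ^ 2) > 0" "cmod (1 - g z ^ 2) > 0"
    using one_minus_square_neq_0[OF z] one_minus_square_neq_0[OF gz] by auto
  ultimately show ?thesis
    by (simp add: \<rho>_def field_simps)
qed

lemma Schwarz_Pick_real_symmetric:
  assumes hol: "g holomorphic_on ball 0 1" and le1: "\<And>z. cmod z < 1 \<Longrightarrow> cmod (g z) \<le> 1"
    and z: "cmod z < 1" and sym: "g (cnj z) = cnj (g z)"
  shows "(1 - cmod z ^ 2) * cmod (1 - g z ^ 2) \<le> (1 - cmod (g z) ^ 2) * cmod (1 - z ^ 2)"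
proof (cases "\<forall>u. cmod u < 1 \<longrightarrow> cmod (g u) < 1")
  case True
  then show ?thesis
    using Schwarz_Pick_conj[OF hol _ z sym] by blast
next
  case False
  then obtain u where u: "cmod u < 1" "cmod (g u) = 1"
    using le1 by (meson order.not_eq_order_implies_strict)
  \<comment> \<open>maximum modulus: \<open>g\<close> is a unimodular constant, real by the symmetry, so both sides vanish\<close>
  have "g constant_on ball 0 1"
    using maximum_modulus_principle[of g "ball 0 1" "ball 0 1" u] hol u le1 by auto
  then have "g (cnj z) = g z"
    using z unfolding constant_on_def by auto
  with sym have "g z \<in> \<real>"
    by (simp add: Reals_cnj_iff)
  moreover have "cmod (g z) = 1"
    using \<open>g constant_on ball 0 1\<close> u z unfolding constant_on_def by auto
  ultimately have "g z ^ 2 = 1"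
    by (auto elim!: Reals_cases simp: abs_square_eq_1 simp flip: of_real_power)
  with \<open>cmod (g z) = 1\<close> show ?thesis by simp
qed

lemma radial_difference_quotient_tendsto:
  fixes g :: "complex \<Rightarrow> complex"
  assumes deriv: "(g has_field_derivative g') (at \<zeta>)"
  shows "((\<lambda>r. (g \<zeta> - g (of_real r * \<zeta>)) / of_real (1 - r)) \<longlongrightarrow> \<zeta> * g') (at_left 1)"
proof -
  have left: "\<forall>\<^sub>F r in at_left 1. r \<in> {0<..<1::real}"
    by (rule eventually_at_left_real) simp
  have "((\<lambda>x. g (x * \<zeta>)) has_field_derivative g' * \<zeta>) (at 1)"
    using DERIV_chain2[of g g' "\<lambda>x. x * \<zeta>" 1 \<zeta> UNIV] deriv DERIV_cmult_right[OF DERIV_ident, of \<zeta>]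
    by simp
  then have quotient: "((\<lambda>x. (g (x * \<zeta>) - g \<zeta>) / (x - 1)) \<longlongrightarrow> g' * \<zeta>) (at 1)"
    by (simp add: has_field_derivative_iff)
  have "filterlim complex_of_real (at 1) (at_left 1)"
  proof (rule filterlim_atI)
    show "(complex_of_real \<longlongrightarrow> 1) (at_left 1)"
      by (auto intro!: tendsto_eq_intros)
    show "\<forall>\<^sub>F r in at_left 1. complex_of_real r \<noteq> 1"
      using left by eventually_elim simp
  qed
  from filterlim_compose[OF quotient this]
  have "((\<lambda>r. (g (of_real r * \<zeta>) - g \<zeta>) / (of_real r - 1)) \<longlongrightarrow> \<zeta> * g') (at_left 1)"
    by (simp add: mult.commute)
  moreover have "(g (of_real r * \<zeta>) - g \<zeta>) / (of_real r - 1) = (g \<zeta> - g (of_real r * \<zeta>)) / of_real (1 - r)"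
    for r :: real
    by (metis minus_diff_eq minus_divide_divide of_real_1 of_real_diff)
  ultimately show ?thesis
    by simp
qed

lemma boundary_Julia_quotient_tendsto:
  assumes deriv: "(g has_field_derivative g') (at \<zeta>)" and unimod: "cmod (g \<zeta>) = 1"
  shows "((\<lambda>r. (1 - cmod (g (of_real r * \<zeta>)) ^ 2) / (1 - r)) \<longlongrightarrow> 2 * Re (\<zeta> * g' * cnj (g \<zeta>)))
           (at_left 1)"
proof -
  define c where "c = g \<zeta>"
  define h where "h r = g (of_real r * \<zeta>)" for r :: real
  define D where "D r = (c - h r) / of_real (1 - r)" for r :: real
  have "(D \<longlongrightarrow> \<zeta> * g') (at_left 1)"
    unfolding D_def h_def c_def by (rule radial_difference_quotient_tendsto[OF deriv])
  moreover have "(h \<longlongrightarrow> c) (at_left 1)"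
    unfolding h_def c_def
    by (rule isCont_tendsto_compose[OF DERIV_isCont[OF deriv]]) (auto intro!: tendsto_eq_intros)
  ultimately have "((\<lambda>r. Re (D r * cnj c + h r * cnj (D r))) \<longlongrightarrow> Re (\<zeta> * g' * cnj c + c * cnj (\<zeta> * g')))
                     (at_left 1)"
    by (intro tendsto_intros)
  also have "Re (\<zeta> * g' * cnj c + c * cnj (\<zeta> * g')) = 2 * Re (\<zeta> * g' * cnj c)"
    by (simp add: algebra_simps)
  finally have lim: "((\<lambda>r. Re (D r * cnj c + h r * cnj (D r))) \<longlongrightarrow> 2 * Re (\<zeta> * g' * cnj c)) (at_left 1)" .
  \<comment> \<open>\<open>1 - |h|\<^sup>2 = c cnj c - h cnj h = (c - h) cnj c + h cnj (c - h)\<close>, as \<open>|c| = 1\<close>\<close>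
  have "Re (D r * cnj c + h r * cnj (D r)) = (1 - cmod (h r) ^ 2) / (1 - r)" for r
  proof -
    have "c * cnj c = 1"
      using unimod by (simp add: c_def complex_mult_cnj cmod_power2 flip: cmod_power2)
    then have "D r * cnj c + h r * cnj (D r) = (1 - h r * cnj (h r)) / of_real (1 - r)"
      by (simp add: D_def add_divide_distrib[symmetric] algebra_simps)
    also have "\<dots> = of_real ((1 - cmod (h r) ^ 2) / (1 - r))"
      by (simp flip: complex_norm_square)
    finally show ?thesis
      by simp
  qed
  with lim show ?thesis
    by (simp add: h_def c_def)
qed

lemma boundary_Julia_nonneg:
  assumes deriv: "(g has_field_derivative g') (at \<zeta>)" and unimod: "cmod (g \<zeta>) = 1"
    and \<zeta>: "cmod \<zeta> = 1" and le1: "\<And>z. cmod z < 1 \<Longrightarrow> cmod (g z) \<le> 1"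
  shows "0 \<le> Re (\<zeta> * g' * cnj (g \<zeta>))"
proof -
  have "\<forall>\<^sub>F r in at_left 1. r \<in> {0<..<1::real}"
    by (rule eventually_at_left_real) simp
  then have "\<forall>\<^sub>F r in at_left 1. 0 \<le> (1 - cmod (g (of_real r * \<zeta>)) ^ 2) / (1 - r)"
  proof eventually_elim
    case (elim r)
    then have "cmod (g (of_real r * \<zeta>)) \<le> 1"
      using \<zeta> by (intro le1) (simp add: norm_mult)
    with elim show ?case
      by (simp add: power_le_one)
  qed
  with tendsto_le[OF trivial_limit_at_left_real boundary_Julia_quotient_tendsto[OF deriv unimod] tendsto_const]
  have "0 \<le> 2 * Re (\<zeta> * g' * cnj (g \<zeta>))" .
  then show ?thesis
    by linarith
qed

lemma boundary_Julia_real_symmetric: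
  assumes hol: "g holomorphic_on ball 0 1" and le1: "\<And>z. cmod z < 1 \<Longrightarrow> cmod (g z) \<le> 1"
    and sym: "\<And>z. g (cnj z) = cnj (g z)"
    and deriv: "(g has_field_derivative g') (at \<zeta>)" and \<zeta>: "cmod \<zeta> = 1" and unimod: "cmod (g \<zeta>) = 1"
  shows "cmod (1 - g \<zeta> ^ 2) \<le> Re (\<zeta> * g' * cnj (g \<zeta>)) * cmod (1 - \<zeta> ^ 2)"
proof -
  define Q where "Q r = (1 - cmod (g (of_real r * \<zeta>)) ^ 2) / (1 - r)" for r :: real
  have "\<forall>\<^sub>F r in at_left 1. r \<in> {0<..<1::real}"
    by (rule eventually_at_left_real) simp
  \<comment> \<open>Schwarz--Pick at \<open>r \<zeta>\<close>, divided by \<open>1 - r\<close>\<close>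
  then have "\<forall>\<^sub>F r in at_left 1.
      (1 + r) * cmod (1 - g (of_real r * \<zeta>) ^ 2) \<le> Q r * cmod (1 - (of_real r * \<zeta>) ^ 2)"
  proof eventually_elim
    case (elim r)
    then have r\<zeta>: "cmod (of_real r * \<zeta>) < 1" "cmod (of_real r * \<zeta>) ^ 2 = r ^ 2"
      using \<zeta> by (auto simp: norm_mult)
    have "(1 - r) * ((1 + r) * cmod (1 - g (of_real r * \<zeta>) ^ 2))
        = (1 - cmod (of_real r * \<zeta>) ^ 2) * cmod (1 - g (of_real r * \<zeta>) ^ 2)"
      using r\<zeta>(2) by (simp add: power2_eq_square algebra_simps)
    also have "\<dots> \<le> (1 - cmod (g (of_real r * \<zeta>)) ^ 2) * cmod (1 - (of_real r * \<zeta>) ^ 2)"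
      using Schwarz_Pick_real_symmetric[OF hol le1 r\<zeta>(1) sym] by simp
    also have "\<dots> = (1 - r) * (Q r * cmod (1 - (of_real r * \<zeta>) ^ 2))"
      using elim by (simp add: Q_def)
    finally have "(1 - r) * ((1 + r) * cmod (1 - g (of_real r * \<zeta>) ^ 2))
        \<le> (1 - r) * (Q r * cmod (1 - (of_real r * \<zeta>) ^ 2))" .
    then show ?case
      by (rule mult_left_le_imp_le) (use elim in auto)
  qed
  moreover have "((\<lambda>r. (1 + r) * cmod (1 - g (of_real r * \<zeta>) ^ 2)) \<longlongrightarrow> (1 + 1) * cmod (1 - g \<zeta> ^ 2)) (at_left 1)"
    by (intro tendsto_intros isCont_tendsto_compose[OF DERIV_isCont[OF deriv]]) (auto intro!: tendsto_eq_intros)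
  moreover have "((\<lambda>r. Q r * cmod (1 - (of_real r * \<zeta>) ^ 2))
      \<longlongrightarrow> 2 * Re (\<zeta> * g' * cnj (g \<zeta>)) * cmod (1 - (of_real 1 * \<zeta>) ^ 2)) (at_left 1)"
    unfolding Q_def by (intro tendsto_intros boundary_Julia_quotient_tendsto[OF deriv unimod])
  ultimately have "(1 + 1) * cmod (1 - g \<zeta> ^ 2) \<le> 2 * Re (\<zeta> * g' * cnj (g \<zeta>)) * cmod (1 - (of_real 1 * \<zeta>) ^ 2)"
    by (intro tendsto_le[OF trivial_limit_at_left_real]) auto
  then show ?thesis
    by (simp only: of_real_1 mult_1 one_add_one mult.assoc mult_le_cancel_left_pos zero_less_numeral)
qed

section \<open>Reflection of functions in RH-infinity\<close>

lemma poly_reflect_poly_neq_0: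
  fixes Q :: "complex poly"
  assumes "Q \<noteq> 0" and roots: "\<And>z. poly Q z = 0 \<Longrightarrow> cmod z < 1" and z: "cmod z \<le> 1"
  shows "poly (reflect_poly Q) z \<noteq> 0"
proof (cases "z = 0")
  case True
  with assms(1) show ?thesis
    by (simp add: poly_0_coeff_0)
next
  case False
  with z have "poly Q (inverse z) \<noteq> 0"
    using roots[of "inverse z"] by (auto simp: norm_inverse inverse_less_1_iff)
  with False show ?thesis
    by (simp add: poly_reflect_poly_nz)
qed

lemma RH_inf_reflection:
  assumes "RH_inf f"
  obtains g S where "open S" "cball 0 1 \<subseteq> S" "g holomorphic_on S"
    "\<And>t. f (cis t) = g (cis (- t))" "\<And>z. g (cnj z) = cnj (g z)"
proof -
  obtain p q :: "real poly" where q0: "q \<noteq> 0" and deg: "degree p \<le> degree q"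
    and roots: "\<And>z. poly (map_poly complex_of_real q) z = 0 \<Longrightarrow> norm z < 1"
    and fpq: "\<And>z. poly (map_poly complex_of_real q) z \<noteq> 0 \<Longrightarrow>
        f z = poly (map_poly complex_of_real p) z / poly (map_poly complex_of_real q) z"
    using assms unfolding RH_inf_def by blast
  define P where "P = map_poly complex_of_real p"
  define Q where "Q = map_poly complex_of_real q"
  define n where "n = degree Q"
  \<comment> \<open>numerator and denominator of \<open>z \<mapsto> f (1 / z)\<close>, whose poles lie outside the closed disc\<close>
  define Pr where "Pr = monom 1 (n - degree P) * reflect_poly P"
  define Qr where "Qr = reflect_poly Q"
  define g where "g z = poly Pr z / poly Qr z" for z
  define S where "S = {z. poly Qr z \<noteq> 0}"
  have "degree P \<le> n"
    using deg by (simp add: P_def Q_def n_def degree_map_poly)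
  then have Pr_inverse: "poly Pr z = z ^ n * poly P (inverse z)" if "z \<noteq> 0" for z
    using that by (simp add: Pr_def poly_monom poly_reflect_poly_nz mult.assoc[symmetric]
                             flip: power_add)
  have Qr_inverse: "poly Qr z = z ^ n * poly Q (inverse z)" if "z \<noteq> 0" for z
    using that by (simp add: Qr_def n_def poly_reflect_poly_nz)
  have "Q \<noteq> 0"
    using q0 by (simp add: Q_def map_poly_eq_0_iff)
  moreover have "\<And>z. poly Q z = 0 \<Longrightarrow> cmod z < 1"
    using roots by (simp add: Q_def)
  ultimately have "cball 0 1 \<subseteq> S"
    unfolding S_def Qr_def using poly_reflect_poly_neq_0 by auto
  moreover have "open S"
    unfolding S_def by (intro open_Collect_neq continuous_intros)
  moreover have "g holomorphic_on S"
    unfolding g_def S_def by (intro holomorphic_intros) auto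
  moreover have "f (cis t) = g (cis (- t))" for t
  proof -
    have "poly Q (cis t) \<noteq> 0"
      using roots[of "cis t"] by (auto simp: Q_def)
    moreover have "inverse (cis (- t)) = cis t"
      by (simp add: cis_inverse)
    ultimately show ?thesis
      using fpq[of "cis t"] Pr_inverse[of "cis (- t)"] Qr_inverse[of "cis (- t)"]
      by (simp add: g_def P_def Q_def)
  qed
  moreover have "g (cnj z) = cnj (g z)" for z
  proof -
    have "coeff Pr i \<in> \<real>" "coeff Qr i \<in> \<real>" for i
      by (simp_all add: Pr_def Qr_def P_def Q_def coeff_monom_mult coeff_reflect_poly coeff_map_poly)
    then show ?thesis
      by (simp add: g_def poly_cnj_real)
  qed
  ultimately show ?thesis
    using that by blast
qed

lemma RH_inf_norm_le_Hinf_norm: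
  assumes "RH_inf f"
  shows "cmod (f (cis t)) \<le> Hinf_norm f"
proof -
  obtain g S where S: "cball 0 1 \<subseteq> S" "g holomorphic_on S" and fg: "\<And>t. f (cis t) = g (cis (- t))"
    using RH_inf_reflection[OF assms] by metis
  have "compact (g ` cball 0 1)"
    using S by (intro compact_continuous_image holomorphic_on_imp_continuous_on) (auto elim: holomorphic_on_subset)
  then obtain B where "\<And>z. cmod z \<le> 1 \<Longrightarrow> cmod (g z) \<le> B"
    unfolding bounded_iff[symmetric] by (metis compact_imp_bounded bounded_iff image_eqI mem_cball_0)
  then have "bdd_above ((\<lambda>w. cmod (f (cis w))) ` {-pi<..pi})"
    by (intro bdd_aboveI2[of _ _ B]) (simp add: fg)
  moreover have "Arg (cis t) \<in> {-pi<..pi}" "cis (Arg (cis t)) = cis t"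
    using Arg_bounded[of "cis t"] by (auto simp: cis_Arg sgn_div_norm)
  ultimately show ?thesis
    unfolding Hinf_norm_def by (metis cSUP_upper)
qed

lemma phase_deriv_reflection:
  assumes S: "open S" "cball 0 1 \<subseteq> S" and hol: "g holomorphic_on S"
    and fg: "\<And>t. f (cis t) = g (cis (- t))" and nz: "g (cis (- w)) \<noteq> 0"
  shows "phase_deriv f w = - Re (cis (- w) * deriv g (cis (- w)) / g (cis (- w)))"
proof -
  define \<zeta> where "\<zeta> = cis (- w)"
  define R where "R z = g (inverse z)" for z
  have "phase_deriv f w = phase_deriv R w"
    by (rule phase_deriv_cong) (simp add: fg R_def cis_inverse)
  also have "\<dots> = Re (cis w * (deriv g \<zeta> * - (\<zeta> ^ 2)) / R (cis w))"
  proof (rule phase_deriv_eq)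
    have "inverse (cis t) \<in> S" for t
      using S by (auto simp: cis_inverse)
    moreover have "isCont g z" if "z \<in> S" for z
      using holomorphic_on_imp_continuous_on[OF hol] S(1) that by (simp add: continuous_on_eq_continuous_at)
    ultimately show "isCont R (cis t)" for t
      unfolding R_def by (intro isCont_o2[where f=inverse and g=g] continuous_intros) auto
    have \<zeta>_inv: "\<zeta> = inverse (cis w)"
      by (simp add: \<zeta>_def cis_inverse)
    have "(g has_field_derivative deriv g \<zeta>) (at (inverse (cis w)))"
      unfolding \<zeta>_inv[symmetric] using S by (intro holomorphic_derivI[OF hol]) (auto simp: \<zeta>_def)
    moreover have "(inverse has_field_derivative - (\<zeta> ^ 2)) (at (cis w))"
      using DERIV_inverse[of "cis w"] by (simp add: \<zeta>_inv power2_eq_square)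
    ultimately show "(R has_field_derivative deriv g \<zeta> * - (\<zeta> ^ 2)) (at (cis w))"
      unfolding R_def by (rule DERIV_chain2)
    show "R (cis w) \<noteq> 0"
      using nz by (simp add: R_def cis_inverse)
  qed
  also have "\<dots> = - Re (\<zeta> * deriv g \<zeta> / g \<zeta>)"
  proof -
    have "cis w * (deriv g \<zeta> * - (\<zeta> ^ 2)) = - ((cis w * \<zeta>) * (\<zeta> * deriv g \<zeta>))"
      by (simp add: power2_eq_square algebra_simps)
    moreover have "cis w * \<zeta> = 1" "R (cis w) = g \<zeta>"
      by (simp_all add: \<zeta>_def R_def cis_mult cis_inverse)
    ultimately show ?thesis
      by (simp only: mult_1 minus_divide_left[symmetric] uminus_complex.sel)
  qed
  finally show ?thesis
    by (simp add: \<zeta>_def)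
qed

lemma norm_1_minus_cis_squared: "cmod (1 - cis a ^ 2) = 2 * \<bar>sin a\<bar>"
proof -
  have "1 - cis a ^ 2 = cis a * (- (2 * \<i> * of_real (sin a)))"
    by (simp add: complex_eq_iff power2_eq_square cos_diff algebra_simps)
  then show ?thesis
    by (simp add: norm_mult)
qed

lemma norm_le_1_on_cball_if_on_circle:
  assumes S: "cball 0 1 \<subseteq> S" and hol: "g holomorphic_on S"
    and circle: "\<And>t. cmod (g (cis t)) \<le> 1" and z: "cmod z \<le> 1"
  shows "cmod (g z) \<le> 1"
proof (rule maximum_modulus_frontier[of g "cball 0 1"])
  have "ball 0 1 \<subseteq> S"
    using S ball_subset_cball by blast
  then show "g holomorphic_on interior (cball 0 1)"
    using hol by (simp add: holomorphic_on_subset)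
  show "continuous_on (closure (cball 0 1)) g"
    using holomorphic_on_imp_continuous_on[OF hol] S by (simp add: continuous_on_subset)
  show "cmod (g u) \<le> 1" if "u \<in> frontier (cball 0 1)" for u
  proof -
    have "cmod u = 1"
      using that by (simp add: frontier_cball)
    moreover from this have "u \<noteq> 0"
      by (metis norm_zero zero_neq_one)
    ultimately have "cis (Arg u) = u"
      using cis_Arg[of u] by (simp add: sgn_div_norm)
    with circle[of "Arg u"] show ?thesis
      by simp
  qed
qed (use z in auto)

lemma RH_inf_phase_deriv_le:
  assumes RH: "RH_inf f" and le1: "\<And>t. cmod (f (cis t)) \<le> 1"
    and val: "f (cis w) = cis \<theta>" and w: "0 \<le> w" "w \<le> pi"
  shows "phase_deriv f w \<le> - \<bar>sin \<theta>\<bar> / sin w"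
proof -
  obtain g S where S: "open S" "cball 0 1 \<subseteq> S" and hol: "g holomorphic_on S"
    and fg: "\<And>t. f (cis t) = g (cis (- t))" and sym: "\<And>z. g (cnj z) = cnj (g z)"
    using RH_inf_reflection[OF RH] by metis
  define \<zeta> where "\<zeta> = cis (- w)"
  define X where "X = Re (\<zeta> * deriv g \<zeta> * cnj (g \<zeta>))"
  have g\<zeta>: "g \<zeta> = cis \<theta>"
    using val by (simp add: fg \<zeta>_def)
  have hol_disc: "g holomorphic_on ball 0 1"
    using hol S(2) ball_subset_cball holomorphic_on_subset by blast
  have "cmod (g (cis t)) \<le> 1" for t
    using le1[of "- t"] by (simp add: fg)
  then have g_le1: "cmod (g z) \<le> 1" if "cmod z \<le> 1" for z
    using norm_le_1_on_cball_if_on_circle[OF S(2) hol _ that] by blast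
  have deriv: "(g has_field_derivative deriv g \<zeta>) (at \<zeta>)"
    using S by (intro holomorphic_derivI[OF hol]) (auto simp: \<zeta>_def)
  have unimod: "cmod (g \<zeta>) = 1" "cmod \<zeta> = 1"
    by (simp add: g\<zeta>) (simp add: \<zeta>_def)
  have "phase_deriv f w = - X"
    using phase_deriv_reflection[OF S hol fg, of w] g\<zeta>
    by (simp add: X_def \<zeta>_def g\<zeta> divide_complex_def cis_cnj cis_inverse)
  moreover have "0 \<le> X"
    unfolding X_def using g_le1 by (intro boundary_Julia_nonneg[OF deriv unimod]) auto
  moreover have "cmod (1 - g \<zeta> ^ 2) \<le> X * cmod (1 - \<zeta> ^ 2)"
    unfolding X_def using g_le1 by (intro boundary_Julia_real_symmetric[OF hol_disc _ sym deriv unimod(2,1)]) auto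
  then have "2 * \<bar>sin \<theta>\<bar> \<le> X * (2 * \<bar>sin (- w)\<bar>)"
    unfolding g\<zeta> by (simp only: \<zeta>_def norm_1_minus_cis_squared)
  then have "2 * \<bar>sin \<theta>\<bar> \<le> X * (2 * sin w)"
    using sin_ge_zero[OF w] by simp
  ultimately show ?thesis
    using sin_ge_zero[OF w] by (cases "sin w = 0") (auto simp: field_simps)
qed

section \<open>First-order all-pass functions\<close>

lemma norm_cis_minus_of_real_squared: "cmod (cis t - of_real a) ^ 2 = 1 - 2 * a * cos t + a ^ 2"
proof -
  have "cmod (cis t - of_real a) ^ 2 = (cos t - a) ^ 2 + sin t ^ 2"
    by (simp add: cmod_power2)
  also have "\<dots> = (sin t ^ 2 + cos t ^ 2) - 2 * a * cos t + a ^ 2"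
    by (simp add: power2_eq_square algebra_simps)
  also have "\<dots> = 1 - 2 * a * cos t + a ^ 2"
    by simp
  finally show ?thesis .
qed

definition allpass1 :: "real \<Rightarrow> real \<Rightarrow> complex \<Rightarrow> complex" where
  "allpass1 s a z = of_real s * (1 - of_real a * z) / (z - of_real a)"

lemma cis_minus_of_real_neq_0:
  assumes "\<bar>a\<bar> < 1"
  shows "cis t - of_real a \<noteq> 0"
  using assms by (metis abs_norm_cancel norm_cis norm_of_real right_minus_eq less_irrefl)

lemma one_minus_of_real_mult_cis: "1 - of_real a * cis t = cis t * cnj (cis t - of_real a)"
  by (simp add: algebra_simps cis_cnj cis_mult)

lemma allpass1_in_AP:
  assumes a: "\<bar>a\<bar> < 1" and s: "\<bar>s\<bar> = 1"
  shows "allpass1 s a \<in> AP"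
  unfolding AP_def
proof (intro CollectI conjI allI)
  show "RH_inf (allpass1 s a)"
    unfolding RH_inf_def
  proof (intro exI conjI allI impI)
    show "[:- a, 1:] \<noteq> 0" "degree [:s, - s * a:] \<le> degree [:- a, 1:]"
      by simp_all
    fix z
    have den: "poly (map_poly complex_of_real [:- a, 1:]) z = z - of_real a"
      by (simp add: map_poly_pCons)
    show "norm z < 1" if "poly (map_poly complex_of_real [:- a, 1:]) z = 0"
      using that a by (simp add: den)
    show "allpass1 s a z = poly (map_poly complex_of_real [:s, - s * a:]) z / poly (map_poly complex_of_real [:- a, 1:]) z"
      by (simp add: den allpass1_def map_poly_pCons algebra_simps)
  qed
  show "cmod (allpass1 s a (cis t)) = 1" for t
    using cis_minus_of_real_neq_0[OF a, of t] s
    by (simp add: allpass1_def one_minus_of_real_mult_cis norm_mult norm_divide del: complex_cnj_diff)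
qed

lemma Hinf_norm_AP:
  assumes "f \<in> AP"
  shows "Hinf_norm f = 1"
  using assms unfolding AP_def Hinf_norm_def by simp

lemma allpass1_denominator_pos:
  fixes a t :: real
  assumes "\<bar>a\<bar> < 1"
  shows "1 - 2 * a * cos t + a ^ 2 > 0"
proof -
  have "cmod (cis t - of_real a) ^ 2 > 0"
    using cis_minus_of_real_neq_0[OF assms, of t] by simp
  then show ?thesis
    by (simp add: norm_cis_minus_of_real_squared)
qed

lemma allpass1_phase_deriv:
  assumes a: "\<bar>a\<bar> < 1" and s: "\<bar>s\<bar> = 1"
  shows "phase_deriv (allpass1 s a) w = (a ^ 2 - 1) / (1 - 2 * a * cos w + a ^ 2)"
proof -
  define z where "z = cis w"
  have nz: "cis t - of_real a \<noteq> 0" for t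
    using cis_minus_of_real_neq_0[OF a] .
  have deriv: "(allpass1 s a has_field_derivative of_real s * (of_real a ^ 2 - 1) / (z - of_real a) ^ 2) (at z)"
    unfolding allpass1_def[abs_def] using nz[of w]
    by (auto intro!: derivative_eq_intros simp: z_def power2_eq_square algebra_simps)
  have "phase_deriv (allpass1 s a) w = Re (z * (of_real s * (of_real a ^ 2 - 1) / (z - of_real a) ^ 2) / allpass1 s a z)"
    unfolding z_def
  proof (rule phase_deriv_eq[OF _ deriv[unfolded z_def]])
    show "isCont (allpass1 s a) (cis t)" for t
      unfolding allpass1_def[abs_def] using nz[of t] by (intro continuous_intros)
    have "cmod (allpass1 s a (cis w)) = 1"
      using allpass1_in_AP[OF a s] by (simp add: AP_def)
    then show "allpass1 s a (cis w) \<noteq> 0"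
      by auto
  qed
  also have "z * (of_real s * (of_real a ^ 2 - 1) / (z - of_real a) ^ 2) / allpass1 s a z
      = of_real ((a ^ 2 - 1) / cmod (z - of_real a) ^ 2)"
  proof -
    define u where "u = z - of_real a"
    have "allpass1 s a z = of_real s * z * cnj u / u"
      by (simp add: allpass1_def z_def u_def one_minus_of_real_mult_cis del: complex_cnj_diff)
    moreover have "z \<noteq> 0" "s \<noteq> 0" "u \<noteq> 0"
      using s nz[of w] by (auto simp: z_def u_def)
    moreover from this(3) have "cnj u \<noteq> 0"
      by simp
    ultimately have "z * (of_real s * (of_real a ^ 2 - 1) / u ^ 2) / allpass1 s a z = (of_real a ^ 2 - 1) / (u * cnj u)"
      by (simp add: field_simps power2_eq_square)
    also have "\<dots> = of_real ((a ^ 2 - 1) / cmod u ^ 2)"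
      by (simp flip: complex_norm_square)
    finally show ?thesis
      by (simp only: u_def)
  qed
  finally show ?thesis
    by (simp add: z_def norm_cis_minus_of_real_squared)
qed

lemma allpass1_interpolation:
  fixes \<theta> w s :: real
  assumes s: "s * s = 1" and d: "sin \<theta> - s * sin w \<noteq> 0"
  defines "a \<equiv> sin (\<theta> + w) / (sin \<theta> - s * sin w)"
  shows "of_real s * (1 - of_real a * cis w) = cis \<theta> * (cis w - of_real a)"
    and "(a ^ 2 - 1) * sin w = s * sin \<theta> * (1 - 2 * a * cos w + a ^ 2)"
proof -
  have trig: "sin \<theta> ^ 2 + cos \<theta> ^ 2 = 1" "sin w ^ 2 + cos w ^ 2 = 1"
    by simp_all
  have ad: "a * (sin \<theta> - s * sin w) = sin \<theta> * cos w + cos \<theta> * sin w"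
    using d by (simp add: a_def sin_add)
  then have im: "- (s * a * sin w) = cos \<theta> * sin w + sin \<theta> * (cos w - a)"
    by (simp add: algebra_simps)
  have "(sin \<theta> - s * sin w) * (s * (1 - a * cos w) - (cos \<theta> * (cos w - a) - sin \<theta> * sin w)) = 0"
    using ad s trig by algebra
  with d have re: "s * (1 - a * cos w) = cos \<theta> * (cos w - a) - sin \<theta> * sin w"
    by simp
  show "of_real s * (1 - of_real a * cis w) = cis \<theta> * (cis w - of_real a)"
    using re im by (simp add: complex_eq_iff algebra_simps)
  show "(a ^ 2 - 1) * sin w = s * sin \<theta> * (1 - 2 * a * cos w + a ^ 2)"
    using re im s trig by algebra
qed

section \<open>The extremal phase derivative\<close>

lemma AP_atI:
  assumes "f \<in> AP" "f (cis w) = cis \<theta>"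
  shows "f \<in> AP_at w \<theta>"
  using assms Hinf_norm_AP[OF assms(1)] by (auto simp: AP_at_def AP_def RF_def)

lemma const_in_AP:
  assumes "c \<in> \<real>" "cmod c = 1"
  shows "(\<lambda>_. c) \<in> AP"
  unfolding AP_def RH_inf_def
proof (intro CollectI conjI exI allI impI)
  show "[:1:] \<noteq> (0 :: real poly)" "degree [:Re c:] \<le> degree [:1 :: real:]"
    by simp_all
  show "norm z < 1" if "poly (map_poly complex_of_real [:1:]) z = 0" for z
    using that by (simp add: map_poly_pCons)
  show "c = poly (map_poly complex_of_real [:Re c:]) z / poly (map_poly complex_of_real [:1:]) z" for z
    using assms(1) by (simp add: map_poly_pCons Reals_def)
qed (use assms(2) in simp)

lemma phase_deriv_const:
  assumes "c \<noteq> 0"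
  shows "phase_deriv (\<lambda>_. c) w = 0"
  using phase_deriv_eq[of "\<lambda>_. c" 0 w] assms by simp

lemma abs_sin_add_less:
  fixes \<theta> w :: real
  assumes "sin \<theta> \<noteq> 0" and sin_w: "sin w > 0"
  shows "\<bar>sin (\<theta> + w)\<bar> < \<bar>sin \<theta>\<bar> + sin w"
proof -
  have "sin w ^ 2 > 0"
    using sin_w by simp
  then have "cos w ^ 2 < 1"
    using sin_cos_squared_add[of w] by linarith
  then have "\<bar>sin \<theta>\<bar> * \<bar>cos w\<bar> < \<bar>sin \<theta>\<bar>"
    using assms(1) by (simp add: abs_square_less_1)
  moreover have "\<bar>cos \<theta>\<bar> * sin w \<le> sin w"
    using sin_w by (intro mult_left_le_one_le) auto
  moreover have "\<bar>sin (\<theta> + w)\<bar> \<le> \<bar>sin \<theta>\<bar> * \<bar>cos w\<bar> + \<bar>cos \<theta>\<bar> * sin w"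
    using sin_w abs_triangle_ineq[of "sin \<theta> * cos w" "cos \<theta> * sin w"] by (simp add: sin_add abs_mult)
  ultimately show ?thesis
    by linarith
qed

lemma AP_at_attains_phase_bound:
  assumes w: "0 \<le> w" "w \<le> pi" and ends: "w = 0 \<or> w = pi \<Longrightarrow> \<exists>k::int. \<theta> = of_int k * pi"
  shows "\<exists>f\<in>AP_at w \<theta>. phase_deriv f w = - \<bar>sin \<theta>\<bar> / sin w"
proof (cases "sin \<theta> = 0")
  case True
  then have "cis \<theta> \<in> \<real>"
    by (simp add: complex_is_Real_iff)
  then have "(\<lambda>_. cis \<theta>) \<in> AP_at w \<theta>"
    by (intro AP_atI const_in_AP) simp_all
  with True show ?thesis
    by (intro bexI[of _ "\<lambda>_. cis \<theta>"]) (simp_all add: phase_deriv_const)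
next
  case False
  with ends have "w \<noteq> 0" "w \<noteq> pi"
    by (auto simp: sin_zero_iff_int2)
  with w have sin_w: "sin w > 0"
    by (intro sin_gt_zero) auto
  define s :: real where "s = (if sin \<theta> > 0 then -1 else 1)"
  \<comment> \<open>the sign making \<open>s sin \<theta> = - |sin \<theta>|\<close>, so that no cancellation occurs in \<open>sin \<theta> - s sin w\<close>\<close>
  have s: "\<bar>s\<bar> = 1" "s * s = 1" "s * sin \<theta> = - \<bar>sin \<theta>\<bar>"
    using False by (auto simp: s_def)
  have d: "\<bar>sin \<theta> - s * sin w\<bar> = \<bar>sin \<theta>\<bar> + sin w"
    using False sin_w by (auto simp: s_def)
  define a where "a = sin (\<theta> + w) / (sin \<theta> - s * sin w)"
  have "\<bar>sin (\<theta> + w)\<bar> < \<bar>sin \<theta> - s * sin w\<bar>"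
    using abs_sin_add_less[OF False sin_w] d by simp
  then have a: "\<bar>a\<bar> < 1"
    by (simp add: a_def abs_divide)
  have interp: "of_real s * (1 - of_real a * cis w) = cis \<theta> * (cis w - of_real a)"
    "(a ^ 2 - 1) * sin w = s * sin \<theta> * (1 - 2 * a * cos w + a ^ 2)"
    using allpass1_interpolation[OF s(2)] d sin_w unfolding a_def by auto
  have "allpass1 s a \<in> AP_at w \<theta>"
    using interp(1) cis_minus_of_real_neq_0[OF a, of w]
    by (intro AP_atI allpass1_in_AP a s) (simp add: allpass1_def divide_eq_eq)
  moreover have "phase_deriv (allpass1 s a) w = - \<bar>sin \<theta>\<bar> / sin w"
    using interp(2) sin_w s(3) allpass1_denominator_pos[OF a, of w]
    by (simp add: allpass1_phase_deriv[OF a s(1)] field_simps)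
  ultimately show ?thesis
    by blast
qed

lemma SUP_eq_if_maximum_in_subset:
  fixes h :: "'a \<Rightarrow> 'b::complete_lattice"
  assumes "B \<subseteq> A" "x \<in> B" "\<And>y. y \<in> A \<Longrightarrow> h y \<le> h x"
  shows "(SUP y\<in>A. h y) = (SUP y\<in>B. h y)"
proof -
  have "(SUP y\<in>C. h y) = h x" if "x \<in> C" "C \<subseteq> A" for C
    using that assms(3) by (intro antisym SUP_least SUP_upper) auto
  with assms(1,2) show ?thesis
    by auto
qed

theorem proposition3:
  fixes wp tp :: real
  assumes "0 \<le> wp" and "wp \<le> pi"
    and "wp = 0 \<or> wp = pi \<Longrightarrow> \<exists>k::int. tp = of_int k * pi"
  shows "(SUP f\<in>RF wp tp. ereal (phase_deriv f wp)) = (SUP f\<in>AP_at wp tp. ereal (phase_deriv f wp))"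
proof -
  obtain f0 where f0: "f0 \<in> AP_at wp tp" "phase_deriv f0 wp = - \<bar>sin tp\<bar> / sin wp"
    using AP_at_attains_phase_bound[OF assms] by blast
  have "phase_deriv f wp \<le> - \<bar>sin tp\<bar> / sin wp" if "f \<in> RF wp tp" for f
  proof -
    from that have RH: "RH_inf f" and "Hinf_norm f = 1" and "f (cis wp) = cis tp"
      by (auto simp: RF_def)
    with RH_inf_norm_le_Hinf_norm[OF RH] show ?thesis
      using assms(1,2) by (intro RH_inf_phase_deriv_le) auto
  qed
  with f0 show ?thesis
    by (intro SUP_eq_if_maximum_in_subset) (auto simp: AP_at_def)
qed

end
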